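(* Let $V$ be a real sequence and suppose $(-\Delta+V)\psi=0$ has two linearly independent positive solutions $\psi^+,\psi^-$ on $m\le n\le N$, with $N\ge m+2$, normalized so that $\psi^-_n\psi^+_{n+1}-\psi^-_{n+1}\psi^+_n=1$, and let $G_{jk}=\psi^+_{\min(j,k)}\psi^-_{\max(j,k)}$ be the associated Green matrix. Define $z_n:=\sqrt{G_{nn}}$ for $m\le n\le N$, $$S^{[z]}_n:=\frac{1+\sqrt{1+4z_n^2z_{n-1}^2}}{2z_nz_{n-1}}\quad(m<n\le N),\qquad \varphi^\pm_n:=z_n\prod_{k=m+1}^n\big(S^{[z]}_k\big)^{\pm1}.$$ Then: (1) $\varphi^+,\varphi^-$ are an independent pair of solutions of $(-\Delta+V)\varphi=0$ at all interior points $m<n<N$; (2) $G_{nk}=z_nz_k\prod_{\ell=k+1}^n\frac{1}{S^{[z]}_\ell}$ for $m<k<n\le N$; (3) for $m<n<N$, $\frac12\left(\sqrt{1+4G_{nn}G_{n+1\,n+1}}+\sqrt{1+4G_{nn}G_{n-1\,n-1}}\right)=(2+V_n)G_{nn}$.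
   Context: $(\Delta f)_n=f_{n+1}+f_{n-1}-2f_n$; $(-\Delta+V)\psi=0$ at $n$ means $-\psi_{n+1}-\psi_{n-1}+(2+V_n)\psi_n=0$. *)

theory Defs
  imports Complex_Main
begin

definition solves_at :: "(int \<Rightarrow> real) \<Rightarrow> (int \<Rightarrow> real) \<Rightarrow> int \<Rightarrow> bool" where
  "solves_at V f n \<longleftrightarrow> - f (n + 1) - f (n - 1) + (2 + V n) * f n = 0"

definition green :: "(int \<Rightarrow> real) \<Rightarrow> (int \<Rightarrow> real) \<Rightarrow> int \<Rightarrow> int \<Rightarrow> real" where
  "green psip psim j k = psip (min j k) * psim (max j k)"

definition Sz :: "(int \<Rightarrow> real) \<Rightarrow> int \<Rightarrow> real" where
  "Sz z n = (1 + sqrt (1 + 4 * (z n)\<^sup>2 * (z (n - 1))\<^sup>2)) / (2 * z n * z (n - 1))"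

definition phi_plus :: "(int \<Rightarrow> real) \<Rightarrow> int \<Rightarrow> int \<Rightarrow> real" where
  "phi_plus z m n = z n * (\<Prod>k\<in>{m+1..n}. Sz z k)"

definition phi_minus :: "(int \<Rightarrow> real) \<Rightarrow> int \<Rightarrow> int \<Rightarrow> real" where
  "phi_minus z m n = z n * (\<Prod>k\<in>{m+1..n}. inverse (Sz z k))"

end

theory Submission
  imports Defs
begin

text \<open>Put \<open>s n = sqrt (\<psi>\<^sup>+ n / \<psi>\<^sup>- n)\<close>, so that \<open>z n * s n = \<psi>\<^sup>+ n\<close> and
  \<open>z n / s n = \<psi>\<^sup>- n\<close>. The Wronskian makes \<open>1 + 4 G(n-1,n-1) G(n,n)\<close> the perfect square
  \<open>(\<psi>\<^sup>- (n-1) \<psi>\<^sup>+ n + \<psi>\<^sup>- n \<psi>\<^sup>+ (n-1))\<^sup>2\<close>, whence \<open>S\<^sup>[\<^sup>z\<^sup>] n = s n / s (n-1)\<close>.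
  The products defining \<open>\<phi>\<^sup>\<plusminus>\<close> therefore telescope: \<open>\<phi>\<^sup>+ = \<psi>\<^sup>+ / s m\<close> and
  \<open>\<phi>\<^sup>- = s m * \<psi>\<^sup>-\<close> are nonzero multiples of the original pair, and
  \<open>z n * z k * s k / s n = \<psi>\<^sup>+ k * \<psi>\<^sup>- n = G(n,k)\<close>. Finally the two square roots in (3)
  sum to \<open>\<psi>\<^sup>- n (\<psi>\<^sup>+ (n+1) + \<psi>\<^sup>+ (n-1)) + \<psi>\<^sup>+ n (\<psi>\<^sup>- (n+1) + \<psi>\<^sup>- (n-1))\<close>, which the
  equation at \<open>n\<close> turns into \<open>2 (2 + V n) G(n,n)\<close>.\<close>

lemma sqrt_one_plus_four_mult:
  fixes a b :: real
  assumes "a - b = 1" "0 \<le> a" "0 \<le> b"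
  shows "sqrt (1 + 4 * (a * b)) = a + b"
proof -
  have "(a + b)\<^sup>2 = (a - b)\<^sup>2 + 4 * (a * b)"
    by (simp add: power2_eq_square algebra_simps)
  then have "sqrt (1 + 4 * (a * b)) = sqrt ((a + b)\<^sup>2)"
    using assms(1) by simp
  then show ?thesis using assms by simp
qed

lemma prod_int_telescope:
  fixes f :: "int \<Rightarrow> 'a::field"
  assumes "k \<le> n" and "\<And>l. k \<le> l \<Longrightarrow> l \<le> n \<Longrightarrow> f l \<noteq> 0"
  shows "(\<Prod>l\<in>{k+1..n}. f l / f (l - 1)) = f n / f k"
  using assms
proof (induction n rule: int_ge_induct)
  case base
  then show ?case by simp
next
  case (step n)
  have "{k+1..n+1} = insert (n+1) {k+1..n}" using step.hyps by auto
  moreover have "(\<Prod>l\<in>{k+1..n}. f l / f (l - 1)) = f n / f k"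
    using step by simp
  moreover have "f n \<noteq> 0" using step by simp
  ultimately show ?case by simp
qed

lemma solves_at_scaled:
  assumes "solves_at V f n"
  shows "solves_at V (\<lambda>j. c * f j) n"
proof -
  have "- (c * f (n + 1)) - c * f (n - 1) + (2 + V n) * (c * f n)
      = c * (- f (n + 1) - f (n - 1) + (2 + V n) * f n)"
    by (simp add: algebra_simps)
  then show ?thesis using assms by (simp add: solves_at_def)
qed

lemma green_diag: "green p q n n = p n * q n"
  by (simp add: green_def)

locale positive_wronskian_pair =
  fixes p q :: "int \<Rightarrow> real" and m N :: int
  assumes pos_p: "\<And>n. m \<le> n \<Longrightarrow> n \<le> N \<Longrightarrow> p n > 0"
    and pos_q: "\<And>n. m \<le> n \<Longrightarrow> n \<le> N \<Longrightarrow> q n > 0"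
    and wronskian: "\<And>n. m \<le> n \<Longrightarrow> n < N \<Longrightarrow> q n * p (n + 1) - q (n + 1) * p n = 1"
begin

abbreviation z :: "int \<Rightarrow> real" where
  "z \<equiv> \<lambda>n. sqrt (green p q n n)"

definition sqrt_ratio :: "int \<Rightarrow> real" where
  "sqrt_ratio n = sqrt (p n / q n)"

lemma sqrt_ratio_pos: "m \<le> n \<Longrightarrow> n \<le> N \<Longrightarrow> sqrt_ratio n > 0"
  using pos_p pos_q by (simp add: sqrt_ratio_def)

lemma z_pos: "m \<le> n \<Longrightarrow> n \<le> N \<Longrightarrow> z n > 0"
  using pos_p pos_q by (simp add: green_diag)

lemma z_mult_sqrt_ratio: "m \<le> n \<Longrightarrow> n \<le> N \<Longrightarrow> z n * sqrt_ratio n = p n"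
  using pos_p[of n] pos_q[of n]
  by (simp add: green_diag sqrt_ratio_def real_sqrt_mult real_sqrt_divide field_simps)

lemma z_div_sqrt_ratio: "m \<le> n \<Longrightarrow> n \<le> N \<Longrightarrow> z n / sqrt_ratio n = q n"
  using pos_p[of n] pos_q[of n]
  by (simp add: green_diag sqrt_ratio_def real_sqrt_mult real_sqrt_divide field_simps)

lemma z_squared: "m \<le> n \<Longrightarrow> n \<le> N \<Longrightarrow> (z n)\<^sup>2 = green p q n n"
  using pos_p[of n] pos_q[of n] by (simp add: green_diag)

lemma sqrt_one_plus_four_green_succ:
  assumes "m \<le> n" "n < N"
  shows "sqrt (1 + 4 * green p q n n * green p q (n+1) (n+1)) = q n * p (n+1) + q (n+1) * p n"
proof -
  have eq: "4 * green p q n n * green p q (n+1) (n+1) = 4 * ((q n * p (n+1)) * (q (n+1) * p n))"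
    by (simp add: green_diag mult_ac)
  show ?thesis
    unfolding eq using assms pos_p pos_q
    by (intro sqrt_one_plus_four_mult wronskian) (auto intro!: mult_nonneg_nonneg less_imp_le)
qed

lemma Sz_eq_sqrt_ratio_quotient:
  assumes "m < n" "n \<le> N"
  shows "Sz z n = sqrt_ratio n / sqrt_ratio (n - 1)"
proof -
  have w: "q (n-1) * p n - q n * p (n-1) = 1"
    using wronskian[of "n-1"] assms by simp
  have "sqrt (1 + 4 * (z n)\<^sup>2 * (z (n - 1))\<^sup>2) = q (n-1) * p n + q n * p (n-1)"
    using sqrt_one_plus_four_green_succ[of "n-1"] assms by (simp add: z_squared mult_ac)
  then have "1 + sqrt (1 + 4 * (z n)\<^sup>2 * (z (n - 1))\<^sup>2) = 2 * (q (n-1) * p n)"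
    using w by (simp add: algebra_simps)
  then have "Sz z n = 2 * (q (n-1) * p n) / (2 * z n * z (n-1))"
    by (simp only: Sz_def)
  also have "\<dots> = (z n * sqrt_ratio n) * (z (n-1) / sqrt_ratio (n-1)) / (z n * z (n-1))"
    using assms by (simp add: z_mult_sqrt_ratio z_div_sqrt_ratio)
  also have "\<dots> = sqrt_ratio n / sqrt_ratio (n - 1)"
    using assms z_pos[of n] z_pos[of "n-1"] sqrt_ratio_pos[of "n-1"] by (simp add: field_simps)
  finally show ?thesis .
qed

lemma prod_Sz:
  assumes "m \<le> k" "k \<le> n" "n \<le> N"
  shows "(\<Prod>l\<in>{k+1..n}. Sz z l) = sqrt_ratio n / sqrt_ratio k"
proof -
  have "(\<Prod>l\<in>{k+1..n}. Sz z l) = (\<Prod>l\<in>{k+1..n}. sqrt_ratio l / sqrt_ratio (l - 1))"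
    using assms by (intro prod.cong) (auto simp: Sz_eq_sqrt_ratio_quotient)
  also have "\<dots> = sqrt_ratio n / sqrt_ratio k"
    using assms sqrt_ratio_pos by (intro prod_int_telescope) (auto simp: less_imp_neq[symmetric])
  finally show ?thesis .
qed

lemma prod_inverse_Sz:
  assumes "m \<le> k" "k \<le> n" "n \<le> N"
  shows "(\<Prod>l\<in>{k+1..n}. inverse (Sz z l)) = sqrt_ratio k / sqrt_ratio n"
  using prod_Sz[OF assms] prod_inversef[of "Sz z"] by (simp add: o_def)

lemma phi_plus_eq:
  assumes "m \<le> n" "n \<le> N"
  shows "phi_plus z m n = p n / sqrt_ratio m"
proof -
  have "phi_plus z m n = z n * sqrt_ratio n / sqrt_ratio m"
    using prod_Sz[of m n] assms by (simp add: phi_plus_def)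
  then show ?thesis using assms by (simp add: z_mult_sqrt_ratio)
qed

lemma phi_minus_eq:
  assumes "m \<le> n" "n \<le> N"
  shows "phi_minus z m n = sqrt_ratio m * q n"
proof -
  have "phi_minus z m n = sqrt_ratio m * (z n / sqrt_ratio n)"
    using prod_inverse_Sz[of m n] assms by (simp add: phi_minus_def)
  then show ?thesis using assms by (simp add: z_div_sqrt_ratio)
qed

lemma green_eq_prod_inverse_Sz:
  assumes "m \<le> k" "k \<le> n" "n \<le> N"
  shows "green p q n k = z n * z k * (\<Prod>l\<in>{k+1..n}. 1 / Sz z l)"
proof -
  have "z n * z k * (\<Prod>l\<in>{k+1..n}. 1 / Sz z l) = (z k * sqrt_ratio k) * (z n / sqrt_ratio n)"
    using prod_inverse_Sz[of k n] assms by (simp add: divide_inverse)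
  also have "\<dots> = p k * q n"
    using assms by (simp add: z_mult_sqrt_ratio z_div_sqrt_ratio)
  finally show ?thesis using assms by (simp add: green_def)
qed

lemma green_diag_equation:
  assumes "m < n" "n < N" "solves_at V p n" "solves_at V q n"
  shows "(sqrt (1 + 4 * green p q n n * green p q (n+1) (n+1))
          + sqrt (1 + 4 * green p q n n * green p q (n-1) (n-1))) / 2 = (2 + V n) * green p q n n"
proof -
  have "sqrt (1 + 4 * green p q n n * green p q (n-1) (n-1)) = q (n-1) * p n + q n * p (n-1)"
    using sqrt_one_plus_four_green_succ[of "n-1"] assms by (simp add: mult_ac)
  moreover have "sqrt (1 + 4 * green p q n n * green p q (n+1) (n+1)) = q n * p (n+1) + q (n+1) * p n"
    using sqrt_one_plus_four_green_succ[of n] assms by simp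
  ultimately have "sqrt (1 + 4 * green p q n n * green p q (n+1) (n+1))
      + sqrt (1 + 4 * green p q n n * green p q (n-1) (n-1))
      = q n * (p (n+1) + p (n-1)) + p n * (q (n+1) + q (n-1))"
    by (simp add: algebra_simps)
  also have "\<dots> = 2 * ((2 + V n) * green p q n n)"
  proof -
    have "p (n+1) + p (n-1) = (2 + V n) * p n" "q (n+1) + q (n-1) = (2 + V n) * q n"
      using assms(3,4) by (simp_all add: solves_at_def)
    then show ?thesis by (simp add: green_diag algebra_simps)
  qed
  finally show ?thesis by simp
qed

end

theorem theorem8:
  fixes V psip psim :: "int \<Rightarrow> real" and m N :: int
  assumes "N \<ge> m + 2"
    and sol_p: "\<And>n. m < n \<Longrightarrow> n < N \<Longrightarrow> solves_at V psip n"
    and sol_m: "\<And>n. m < n \<Longrightarrow> n < N \<Longrightarrow> solves_at V psim n"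
    and pos_p: "\<And>n. m \<le> n \<Longrightarrow> n \<le> N \<Longrightarrow> psip n > 0"
    and pos_m: "\<And>n. m \<le> n \<Longrightarrow> n \<le> N \<Longrightarrow> psim n > 0"
    and indep: "\<And>a b. (\<And>n. m \<le> n \<Longrightarrow> n \<le> N \<Longrightarrow> a * psip n + b * psim n = 0) \<Longrightarrow> a = 0 \<and> b = 0"
    and wronsk: "\<And>n. m \<le> n \<Longrightarrow> n < N \<Longrightarrow> psim n * psip (n + 1) - psim (n + 1) * psip n = 1"
  defines "G \<equiv> green psip psim"
  defines "z \<equiv> (\<lambda>n. sqrt (G n n))"
  shows "(\<forall>n. m < n \<and> n < N \<longrightarrow> solves_at V (phi_plus z m) n \<and> solves_at V (phi_minus z m) n)
       \<and> (\<forall>a b. (\<forall>n. m \<le> n \<and> n \<le> N \<longrightarrow> a * phi_plus z m n + b * phi_minus z m n = 0) \<longrightarrow> a = 0 \<and> b = 0)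
       \<and> (\<forall>n k. m < k \<and> k < n \<and> n \<le> N \<longrightarrow>
              G n k = z n * z k * (\<Prod>l\<in>{k+1..n}. 1 / Sz z l))
       \<and> (\<forall>n. m < n \<and> n < N \<longrightarrow>
              (sqrt (1 + 4 * G n n * G (n+1) (n+1)) + sqrt (1 + 4 * G n n * G (n-1) (n-1))) / 2
              = (2 + V n) * G n n)"
proof -
  interpret positive_wronskian_pair psip psim m N
    using pos_p pos_m wronsk by unfold_locales
  define c where "c = sqrt_ratio m"
  have "c > 0" using sqrt_ratio_pos assms(1) by (simp add: c_def)
  have phi_plus_scaled: "phi_plus z m n = inverse c * psip n" if "m \<le> n" "n \<le> N" for n
    using phi_plus_eq[OF that] by (simp add: z_def G_def c_def divide_inverse mult.commute)
  have phi_minus_scaled: "phi_minus z m n = c * psim n" if "m \<le> n" "n \<le> N" for n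
    using phi_minus_eq[OF that] by (simp add: z_def G_def c_def)
  have "solves_at V (phi_plus z m) n \<and> solves_at V (phi_minus z m) n" if "m < n" "n < N" for n
  proof
    show "solves_at V (phi_plus z m) n"
      using solves_at_scaled[OF sol_p[OF that], of "inverse c"] that
      by (simp add: solves_at_def phi_plus_scaled)
    show "solves_at V (phi_minus z m) n"
      using solves_at_scaled[OF sol_m[OF that], of c] that
      by (simp add: solves_at_def phi_minus_scaled)
  qed
  moreover have "a = 0 \<and> b = 0"
    if "\<forall>n. m \<le> n \<and> n \<le> N \<longrightarrow> a * phi_plus z m n + b * phi_minus z m n = 0" for a b
  proof -
    have "a * inverse c = 0 \<and> b * c = 0"
      using that by (intro indep) (simp add: phi_plus_scaled phi_minus_scaled mult.assoc)
    then show ?thesis using \<open>c > 0\<close> by simp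
  qed
  moreover have "G n k = z n * z k * (\<Prod>l\<in>{k+1..n}. 1 / Sz z l)"
    if "m < k" "k < n" "n \<le> N" for n k
    using green_eq_prod_inverse_Sz[of k n] that by (simp add: z_def G_def)
  moreover have "(sqrt (1 + 4 * G n n * G (n+1) (n+1)) + sqrt (1 + 4 * G n n * G (n-1) (n-1))) / 2
      = (2 + V n) * G n n" if "m < n" "n < N" for n
    using green_diag_equation[OF that sol_p[OF that] sol_m[OF that]] by (simp add: G_def)
  ultimately show ?thesis by blast
qed

end
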